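(* Let $\langle \mathscr{A} \mid \mathscr{R} \rangle$ be a $C(4)$ presentation. Suppose $w = XYZw'$, where $XYZ$ is a relation word with $X$, $Y$, $Z$ respectively its maximal piece prefix, middle word and maximal piece suffix, and $XY$ is a clean overlap prefix of $w$. Let $p$ be a piece. Then $\rho(pw') < \rho(w)$.
   Context: A monoid presentation $\langle \mathscr{A} \mid \mathscr{R} \rangle$ consists of an alphabet $\mathscr{A}$ and a set $\mathscr{R} \subseteq \mathscr{A}^* \times \mathscr{A}^*$ of relations. A relation word is a word occurring as one side of a relation. A piece is a word which occurs as a factor of two distinct relation words, or in two different (possibly overlapping) positions within one relation word; the empty word is always a piece. The presentation is $C(n)$ if no relation word can be written as a product of strictly fewer than $n$ pieces. For a relation word $R$ in a $C(3)$ (or stronger) presentation write $R = X_R Y_R Z_R$ where $X_R$ is the longest prefix of $R$ which is a piece (maximal piece prefix), $Z_R$ is the longest suffix which is a piece (maximal piece suffix), and $Y_R$ is the remaining middle word. A relation prefix of a word $u$ is a prefix of $u$ of the form $aX_RY_R$ for some word $a$ and relation word $R$. An overlap prefix of $u$ is a relation prefix admitting a factorisation $b X_1 Y_1' X_2 Y_2' \cdots X_n Y_n$ where: $n \geq 1$; this prefix has no factor of the form $X_0Y_0$ ($X_0,Y_0$ the maximal piece prefix and middle word of some relation word) beginning before the end of $b$; for each $i$, $R_i = X_iY_iZ_i$ is a relation word with $X_i$, $Y_i$, $Z_i$ its maximal piece prefix, middle word and maximal piece suffix; and for $1 \leq i < n$, $Y_i'$ is a proper non-empty prefix of $Y_i$.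 A relation prefix $aXY$ of $u$ is clean if $u$ does not have a prefix $aXY'X_1Y_1$ where $X_1, Y_1$ are the maximal piece prefix and middle word of some relation word and $Y'$ is a proper non-empty prefix of $Y$. The function $\rho : \mathscr{A}^* \to \mathbb{Z}$ is defined by $\rho(w) = -1$ if $w$ has no clean overlap prefix, and otherwise $\rho(w)$ is the length of the suffix of $w$ following the clean overlap prefix. *)

theory Defs
  imports Main "HOL-Library.Sublist"
begin

definition relation_words :: "('a list \<times> 'a list) set \<Rightarrow> 'a list set" where
  "relation_words R = {u. \<exists>v. (u, v) \<in> R \<or> (v, u) \<in> R}"

definition occurs_at :: "'a list \<Rightarrow> 'a list \<Rightarrow> nat \<Rightarrow> bool" where
  "occurs_at p r i \<longleftrightarrow> (\<exists>s t. r = s @ p @ t \<and> length s = i)"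

definition piece :: "('a list \<times> 'a list) set \<Rightarrow> 'a list \<Rightarrow> bool" where
  "piece R p \<longleftrightarrow> p = [] \<or>
     (\<exists>r1 i1 r2 i2. r1 \<in> relation_words R \<and> r2 \<in> relation_words R \<and>
        occurs_at p r1 i1 \<and> occurs_at p r2 i2 \<and> (r1, i1) \<noteq> (r2, i2))"

definition small_overlap_C :: "nat \<Rightarrow> ('a list \<times> 'a list) set \<Rightarrow> bool" where
  "small_overlap_C n R \<longleftrightarrow>
     (\<forall>r \<in> relation_words R. \<forall>ps. (\<forall>q \<in> set ps. piece R q) \<and> concat ps = r \<longrightarrow> n \<le> length ps)"

definition max_piece_prefix :: "('a list \<times> 'a list) set \<Rightarrow> 'a list \<Rightarrow> 'a list" where
  "max_piece_prefix R r = take (GREATEST k. k \<le> length r \<and> piece R (take k r)) r"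

definition max_piece_suffix :: "('a list \<times> 'a list) set \<Rightarrow> 'a list \<Rightarrow> 'a list" where
  "max_piece_suffix R r =
     drop (length r - (GREATEST k. k \<le> length r \<and> piece R (drop (length r - k) r))) r"

definition middle_word :: "('a list \<times> 'a list) set \<Rightarrow> 'a list \<Rightarrow> 'a list" where
  "middle_word R r =
     drop (length (max_piece_prefix R r)) (take (length r - length (max_piece_suffix R r)) r)"

definition clean :: "('a list \<times> 'a list) set \<Rightarrow> 'a list \<Rightarrow> 'a list \<Rightarrow> 'a list \<Rightarrow> 'a list \<Rightarrow> bool" where
  "clean R u a X Y \<longleftrightarrow>
     \<not> (\<exists>Y' r1. r1 \<in> relation_words R \<and> Y' \<noteq> [] \<and> strict_prefix Y' Y \<and>
          prefix (a @ X @ Y' @ max_piece_prefix R r1 @ middle_word R r1) u)"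

text \<open>v is an overlap prefix of u, witnessed by the factorisation
  v = b X_1 Y_1' ... X_(n-1) Y_(n-1)' X_n Y_n,
  where rs = [R_1,...,R_n] (n \<ge> 1) and ys = [Y_1',...,Y_(n-1)'];
  a = b X_1 Y_1' ...\<close>
definition overlap_factorisation ::
  "('a list \<times> 'a list) set \<Rightarrow> 'a list \<Rightarrow> 'a list \<Rightarrow> 'a list \<Rightarrow> 'a list list \<Rightarrow> 'a list list \<Rightarrow> bool" where
  "overlap_factorisation R u v b rs ys \<longleftrightarrow>
     prefix v u \<and>
     rs \<noteq> [] \<and> set rs \<subseteq> relation_words R \<and> length ys = length rs - 1 \<and>
     (\<forall>i < length ys. ys ! i \<noteq> [] \<and> strict_prefix (ys ! i) (middle_word R (rs ! i))) \<and>
     v = b @ concat (map (\<lambda>(r, y). max_piece_prefix R r @ y) (zip (butlast rs) ys))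
           @ max_piece_prefix R (last rs) @ middle_word R (last rs) \<and>
     \<not> (\<exists>r0 s t. r0 \<in> relation_words R \<and>
           v = s @ (max_piece_prefix R r0 @ middle_word R r0) @ t \<and> length s < length b)"

definition clean_overlap_prefix :: "('a list \<times> 'a list) set \<Rightarrow> 'a list \<Rightarrow> 'a list \<Rightarrow> bool" where
  "clean_overlap_prefix R u v \<longleftrightarrow>
     (\<exists>b rs ys. overlap_factorisation R u v b rs ys \<and>
        clean R u (b @ concat (map (\<lambda>(r, y). max_piece_prefix R r @ y) (zip (butlast rs) ys)))
          (max_piece_prefix R (last rs)) (middle_word R (last rs)))"

definition rho :: "('a list \<times> 'a list) set \<Rightarrow> 'a list \<Rightarrow> int" where
  "rho R w = (if \<exists>v. clean_overlap_prefix R w v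
              then int (length w) - int (length (SOME v. clean_overlap_prefix R w v))
              else -1)"

end

theory Submission
  imports Defs
begin

text \<open>Only C(3) is needed. Every overlap prefix ends in a factor \<open>X\<^sub>R Y\<^sub>R\<close>, which is not a
piece; hence an overlap prefix of \<open>p w'\<close> is longer than the piece \<open>p\<close>, and \<open>\<rho>(p w') < |w'|\<close>.
Conversely, no overlap prefix of \<open>w = X Y Z w'\<close> reaches beyond \<open>XYZ\<close>: it would contain \<open>XY\<close>
at position 0, so its first block \<open>X\<^sub>1 Y\<^sub>1'\<close> starts the word, and being a non-piece prefix of
both \<open>R\<^sub>1\<close> and \<open>w\<close> it forces \<open>R\<^sub>1 = XYZ\<close>. A second block then starts strictly inside \<open>Y\<close>:
either it lies within \<open>XYZ\<close>, a second occurrence of a non-piece, or it overhangs \<open>XYZ\<close>, and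
then the suffix of \<open>XYZ\<close> where it starts is a piece longer than \<open>Z\<close>. So \<open>\<rho>(w) \<ge> |w'|\<close>.\<close>

lemma piece_sublist:
  assumes "sublist q p" and "piece R p"
  shows "piece R q"
proof (cases "p = []")
  case True
  then show ?thesis using assms(1) by (simp add: piece_def)
next
  case False
  obtain u t where p: "p = u @ q @ t" using assms(1) by (auto simp: sublist_def)
  obtain r1 i1 r2 i2 where rw: "r1 \<in> relation_words R" "r2 \<in> relation_words R"
    and occ: "occurs_at p r1 i1" "occurs_at p r2 i2" and ne: "(r1, i1) \<noteq> (r2, i2)"
    using assms(2) False unfolding piece_def by blast
  have "occurs_at q r1 (i1 + length u)" "occurs_at q r2 (i2 + length u)"
    using occ unfolding occurs_at_def p by (metis append.assoc length_append)+
  moreover have "(r1, i1 + length u) \<noteq> (r2, i2 + length u)" using ne by simp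
  ultimately show ?thesis using rw unfolding piece_def by blast
qed

lemma pieceI:
  assumes "r1 \<in> relation_words R" "r2 \<in> relation_words R"
    and "r1 = s1 @ q @ t1" "r2 = s2 @ q @ t2" "(r1, length s1) \<noteq> (r2, length s2)"
  shows "piece R q"
  using assms unfolding piece_def occurs_at_def by blast

lemma small_overlap_C_mono:
  "m \<le> n \<Longrightarrow> small_overlap_C n R \<Longrightarrow> small_overlap_C m R"
  unfolding small_overlap_C_def by (meson order_trans)

lemma relation_word_not_two_pieces:
  assumes "small_overlap_C 3 R" "r \<in> relation_words R" "piece R a" "piece R b"
  shows "r \<noteq> a @ b"
proof
  assume "r = a @ b"
  then have "concat [a, b] = r" "\<forall>q \<in> set [a, b]. piece R q" using assms(3,4) by auto
  then have "3 \<le> length [a, b]" using assms(1,2) unfolding small_overlap_C_def by blast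
  then show False by simp
qed

lemma relation_word_not_piece:
  assumes "small_overlap_C 3 R" "r \<in> relation_words R"
  shows "\<not> piece R r"
proof
  assume "piece R r"
  moreover have "piece R []" by (simp add: piece_def)
  ultimately show False using relation_word_not_two_pieces[OF assms] by fastforce
qed

lemma
  shows prefix_max_piece_prefix: "prefix (max_piece_prefix R r) r"
    and piece_max_piece_prefix: "piece R (max_piece_prefix R r)"
    and max_piece_prefix_maximal: "prefix q r \<Longrightarrow> piece R q \<Longrightarrow> length q \<le> length (max_piece_prefix R r)"
proof -
  let ?P = "\<lambda>k. k \<le> length r \<and> piece R (take k r)"
  have "?P (Greatest ?P)"
    by (rule GreatestI_nat[where k=0 and b="length r"]) (auto simp: piece_def)
  moreover have mpp: "max_piece_prefix R r = take (Greatest ?P) r"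
    unfolding max_piece_prefix_def ..
  ultimately show "prefix (max_piece_prefix R r) r" "piece R (max_piece_prefix R r)"
    by (auto simp: take_is_prefix)
  assume "prefix q r" "piece R q"
  then have "?P (length q)" by (metis prefix_length_le prefix_def append_eq_conv_conj)
  then have "length q \<le> Greatest ?P" by (rule Greatest_le_nat[where b="length r"]) simp
  then show "length q \<le> length (max_piece_prefix R r)"
    using \<open>?P (Greatest ?P)\<close> mpp by simp
qed

lemma
  shows suffix_max_piece_suffix: "suffix (max_piece_suffix R r) r"
    and piece_max_piece_suffix: "piece R (max_piece_suffix R r)"
    and max_piece_suffix_maximal: "suffix q r \<Longrightarrow> piece R q \<Longrightarrow> length q \<le> length (max_piece_suffix R r)"
proof -
  let ?P = "\<lambda>k. k \<le> length r \<and> piece R (drop (length r - k) r)"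
  have "?P (Greatest ?P)"
    by (rule GreatestI_nat[where k=0 and b="length r"]) (auto simp: piece_def)
  moreover have mps: "max_piece_suffix R r = drop (length r - Greatest ?P) r"
    unfolding max_piece_suffix_def ..
  ultimately show "suffix (max_piece_suffix R r) r" "piece R (max_piece_suffix R r)"
    by (auto simp: suffix_drop)
  assume "suffix q r" "piece R q"
  then have "?P (length q)" by (auto simp: suffix_def)
  then have "length q \<le> Greatest ?P" by (rule Greatest_le_nat[where b="length r"]) simp
  then show "length q \<le> length (max_piece_suffix R r)"
    using \<open>?P (Greatest ?P)\<close> mps by simp
qed

lemma relation_word_decomp:
  assumes "small_overlap_C 3 R" "r \<in> relation_words R"
  shows "r = max_piece_prefix R r @ middle_word R r @ max_piece_suffix R r"
    and "middle_word R r \<noteq> []"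
proof -
  define X where "X = max_piece_prefix R r"
  define Z where "Z = max_piece_suffix R r"
  obtain T where rX: "r = X @ T" using prefix_max_piece_prefix unfolding X_def prefix_def by blast
  obtain S where rZ: "r = S @ Z" using suffix_max_piece_suffix unfolding Z_def suffix_def by blast
  have long: "length X + length Z < length r"
  proof (rule ccontr)
    assume "\<not> ?thesis"
    moreover have "suffix T r" "suffix Z r" using rX rZ by (metis suffixI)+
    ultimately have "suffix T Z" using rX suffix_length_suffix[of T r Z] by simp
    then have "piece R T"
      using piece_sublist[OF suffix_imp_sublist] piece_max_piece_suffix Z_def by blast
    moreover have "piece R X" using piece_max_piece_prefix X_def by blast
    ultimately show False using relation_word_not_two_pieces[OF assms] rX by blast
  qed
  have "take (length r - length Z) r = S" using rZ by simp
  then have Y: "middle_word R r = drop (length X) S"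
    unfolding middle_word_def X_def Z_def by simp
  have "prefix X r" "prefix S r" using rX rZ by (metis prefixI)+
  then have "prefix X S" using rZ long prefix_length_prefix[of X r S] by simp
  then have "S = X @ drop (length X) S" by (metis append_take_drop_id prefix_def append_eq_conv_conj)
  then show "r = max_piece_prefix R r @ middle_word R r @ max_piece_suffix R r"
    using rZ Y unfolding X_def Z_def by (metis append.assoc)
  show "middle_word R r \<noteq> []" using Y rZ long by simp
qed

lemma
  assumes "small_overlap_C 3 R" "r \<in> relation_words R" "y \<noteq> []" "prefix y (middle_word R r)"
  shows prefix_max_piece_prefix_append: "prefix (max_piece_prefix R r @ y) r"
    and not_piece_max_piece_prefix_append: "\<not> piece R (max_piece_prefix R r @ y)"
proof -
  obtain t where "middle_word R r = y @ t" using assms(4) by (auto simp: prefix_def)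
  then have "r = (max_piece_prefix R r @ y) @ t @ max_piece_suffix R r"
    using relation_word_decomp(1)[OF assms(1,2)] by simp
  then show pre: "prefix (max_piece_prefix R r @ y) r" by (rule prefixI)
  show "\<not> piece R (max_piece_prefix R r @ y)"
    using max_piece_prefix_maximal[OF pre, of R] assms(3) by auto
qed

lemma not_piece_max_piece_prefix_middle_word:
  assumes "small_overlap_C 3 R" "r \<in> relation_words R"
  shows "\<not> piece R (max_piece_prefix R r @ middle_word R r)"
  using not_piece_max_piece_prefix_append[OF assms] relation_word_decomp(2)[OF assms] by simp

lemma piece_if_prefix_of_distinct:
  assumes "r1 \<in> relation_words R" "r2 \<in> relation_words R" "r1 \<noteq> r2"
    and "prefix q r1" "prefix q r2"
  shows "piece R q"
proof -
  obtain t1 t2 where "r1 = [] @ q @ t1" "r2 = [] @ q @ t2"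
    using assms(4,5) by (auto elim!: prefixE)
  then show ?thesis using pieceI[OF assms(1,2)] assms(3) by blast
qed

lemma relation_word_eq_if_common_prefix:
  assumes "small_overlap_C 3 R" "r1 \<in> relation_words R" "r2 \<in> relation_words R"
    and "prefix q r1" "\<not> piece R q" "prefix q u" "prefix r2 u"
  shows "r1 = r2"
proof (rule ccontr)
  assume ne: "r1 \<noteq> r2"
  consider "prefix q r2" | "prefix r2 q" using prefix_same_cases assms(6,7) by blast
  then show False
  proof cases
    case 1
    then show False
      using piece_if_prefix_of_distinct[OF assms(2,3) ne assms(4)] assms(5) by blast
  next
    case 2
    then have "prefix r2 r1" using assms(4) by (rule prefix_order.trans)
    then have "piece R r2"
      using piece_if_prefix_of_distinct[OF assms(2,3) ne] by blast
    then show False using relation_word_not_piece[OF assms(1,3)] by blast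
  qed
qed

lemma piece_if_suffix_overlaps_prefix:
  assumes "r1 \<in> relation_words R" "r2 \<in> relation_words R"
    and "r1 = s @ d" "s \<noteq> []" "prefix q r2" "\<not> piece R q" "prefix q u" "prefix d u"
  shows "piece R d"
proof -
  obtain t2 where r2: "r2 = [] @ q @ t2" using assms(5) by (auto elim!: prefixE)
  have "(r1, length s) \<noteq> (r2, length [])" using assms(4) by simp
  note distinct_occurrences = pieceI[OF assms(1,2) _ _ this]
  consider "prefix q d" | "prefix d q" using prefix_same_cases assms(7,8) by blast
  then show ?thesis
  proof cases
    case 1
    then obtain t where "r1 = s @ q @ t" using assms(3) by (auto elim!: prefixE)
    then show ?thesis using distinct_occurrences r2 assms(6) by blast
  next
    case 2
    then obtain t where "r2 = [] @ d @ t" using r2 by (auto elim!: prefixE)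
    then show ?thesis using distinct_occurrences[of d "[]"] assms(3) by simp
  qed
qed

lemma overlap_factorisation_cases:
  assumes "small_overlap_C 3 R" and of: "overlap_factorisation R u v b rs ys"
  obtains (single) r1 where "r1 \<in> relation_words R"
      "v = b @ max_piece_prefix R r1 @ middle_word R r1"
  | (multiple) r1 y1 r2 y2 t where "r1 \<in> relation_words R" "r2 \<in> relation_words R"
      "y1 \<noteq> []" "strict_prefix y1 (middle_word R r1)" "y2 \<noteq> []" "prefix y2 (middle_word R r2)"
      "v = b @ max_piece_prefix R r1 @ y1 @ max_piece_prefix R r2 @ y2 @ t"
proof -
  have rs: "rs \<noteq> []" "set rs \<subseteq> relation_words R" "length ys = length rs - 1"
    and ys: "\<forall>i < length ys. ys ! i \<noteq> [] \<and> strict_prefix (ys ! i) (middle_word R (rs ! i))"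
    and v: "v = b @ concat (map (\<lambda>(r, y). max_piece_prefix R r @ y) (zip (butlast rs) ys))
           @ max_piece_prefix R (last rs) @ middle_word R (last rs)"
    using of unfolding overlap_factorisation_def by auto
  obtain r1 rs' where rs1: "rs = r1 # rs'" using rs(1) by (cases rs) auto
  show thesis
  proof (cases rs')
    case Nil
    then show thesis using single rs v rs1 by simp
  next
    case (Cons r2 rs'')
    then obtain y1 ys' where ys1: "ys = y1 # ys'" using rs(3) rs1 by (cases ys) auto
    have r12: "r1 \<in> relation_words R" "r2 \<in> relation_words R" using rs(2) rs1 Cons by auto
    have y1: "y1 \<noteq> []" "strict_prefix y1 (middle_word R r1)" using ys ys1 rs1 by force+
    show thesis
    proof (cases rs'')
      case Nil
      then have "v = b @ max_piece_prefix R r1 @ y1 @ max_piece_prefix R r2 @ middle_word R r2 @ []"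
        using v rs(3) rs1 Cons ys1 by simp
      then show thesis
        using multiple r12 y1 relation_word_decomp(2)[OF assms(1) r12(2)] by blast
    next
      case (Cons r3 rs3)
      with \<open>rs' = r2 # rs''\<close> obtain y2 ys'' where ys2: "ys' = y2 # ys''"
        using rs(3) rs1 ys1 by (cases ys') auto
      have y2: "y2 \<noteq> []" "strict_prefix y2 (middle_word R r2)"
        using ys[rule_format, of 1] ys1 ys2 rs1 \<open>rs' = r2 # rs''\<close> by auto
      have "v = b @ max_piece_prefix R r1 @ y1 @ max_piece_prefix R r2 @ y2 @
          concat (map (\<lambda>(r, y). max_piece_prefix R r @ y) (zip (butlast rs'') ys''))
           @ max_piece_prefix R (last rs) @ middle_word R (last rs)"
        using v rs1 ys1 ys2 \<open>rs' = r2 # rs''\<close> Cons by simp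
      then show thesis using multiple r12 y1 y2 strict_prefix_def by blast
    qed
  qed
qed

lemma overlap_prefix_longer_than_piece_prefix:
  assumes "small_overlap_C 3 R" "overlap_factorisation R u v b rs ys"
    and "piece R p" "prefix p u"
  shows "length p < length v"
proof (rule ccontr)
  define a where "a = b @ concat (map (\<lambda>(r, y). max_piece_prefix R r @ y) (zip (butlast rs) ys))"
  have v: "v = a @ max_piece_prefix R (last rs) @ middle_word R (last rs)"
    and "prefix v u" and last: "last rs \<in> relation_words R"
    using assms(2) unfolding overlap_factorisation_def a_def by auto
  assume "\<not> length p < length v"
  then have "prefix v p" using prefix_length_prefix[OF \<open>prefix v u\<close> assms(4)] by simp
  then obtain t where "p = a @ (max_piece_prefix R (last rs) @ middle_word R (last rs)) @ t"
    using v by (auto elim!: prefixE)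
  then have "piece R (max_piece_prefix R (last rs) @ middle_word R (last rs))"
    using assms(3) piece_sublist[OF sublist_appendI] by metis
  then show False using not_piece_max_piece_prefix_middle_word[OF assms(1) last] by blast
qed

lemma overlap_factorisation_lead_Nil:
  assumes of: "overlap_factorisation R u v b rs ys" and r: "r \<in> relation_words R"
    and "prefix (max_piece_prefix R r @ middle_word R r) v"
  shows "b = []"
proof (rule ccontr)
  assume "b \<noteq> []"
  obtain t where "v = [] @ (max_piece_prefix R r @ middle_word R r) @ t"
    using assms(3) by (auto elim!: prefixE)
  with r \<open>b \<noteq> []\<close> have "\<exists>r0 s t. r0 \<in> relation_words R \<and>
      v = s @ (max_piece_prefix R r0 @ middle_word R r0) @ t \<and> length s < length b"
    by (intro exI[of _ r] exI[of _ "[]"] exI[of _ t]) simp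
  moreover have "\<not> (\<exists>r0 s t. r0 \<in> relation_words R \<and>
      v = s @ (max_piece_prefix R r0 @ middle_word R r0) @ t \<and> length s < length b)"
    using of unfolding overlap_factorisation_def by (elim conjE)
  ultimately show False by contradiction
qed

lemma not_prefix_second_block:
  assumes C3: "small_overlap_C 3 R" and r: "r \<in> relation_words R" and r2: "r2 \<in> relation_words R"
    and "y1 \<noteq> []" "strict_prefix y1 (middle_word R r)" "y2 \<noteq> []" "prefix y2 (middle_word R r2)"
  shows "\<not> prefix (max_piece_prefix R r @ y1 @ max_piece_prefix R r2 @ y2) (r @ w')"
proof
  obtain s where s: "middle_word R r = y1 @ s" "s \<noteq> []"
    using assms(5) by (auto simp: strict_prefix_def prefix_def)
  define d where "d = s @ max_piece_suffix R r"
  have rd: "r = (max_piece_prefix R r @ y1) @ d"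
    using relation_word_decomp(1)[OF C3 r] unfolding s d_def by (metis append.assoc)
  assume "prefix (max_piece_prefix R r @ y1 @ max_piece_prefix R r2 @ y2) (r @ w')"
  then have "prefix (max_piece_prefix R r2 @ y2) (d @ w')"
    by (subst (asm) rd) simp
  then have "piece R d"
    using piece_if_suffix_overlaps_prefix[OF r r2 rd _
        prefix_max_piece_prefix_append[OF C3 r2 assms(6,7)]
        not_piece_max_piece_prefix_append[OF C3 r2 assms(6,7)], of "d @ w'"] assms(4)
    by simp
  moreover have "suffix d r" using rd by (rule suffixI)
  ultimately have "length d \<le> length (max_piece_suffix R r)"
    by (rule max_piece_suffix_maximal[rotated])
  then show False using s(2) d_def by simp
qed

lemma overlap_prefix_length_le_relation_word:
  assumes C3: "small_overlap_C 3 R" and r: "r \<in> relation_words R"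
    and of: "overlap_factorisation R (r @ w') v b rs ys"
  shows "length v \<le> length r"
proof (rule ccontr)
  assume long: "\<not> length v \<le> length r"
  have v: "prefix v (r @ w')" using of unfolding overlap_factorisation_def by (elim conjE)
  have decomp: "r = max_piece_prefix R r @ middle_word R r @ max_piece_suffix R r"
    using relation_word_decomp(1)[OF C3 r] .
  have "prefix (max_piece_prefix R r @ middle_word R r) v"
  proof (rule prefix_length_prefix[OF _ v])
    show "prefix (max_piece_prefix R r @ middle_word R r) (r @ w')"
      by (subst decomp) simp
    show "length (max_piece_prefix R r @ middle_word R r) \<le> length v"
      using long arg_cong[OF decomp, of length] by simp
  qed
  then have b: "b = []" using overlap_factorisation_lead_Nil[OF of r] by blast
  have first_block: "r1 = r"
    if "r1 \<in> relation_words R" "y1 \<noteq> []" "prefix y1 (middle_word R r1)"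
      "prefix (max_piece_prefix R r1 @ y1) v" for r1 y1
    using relation_word_eq_if_common_prefix[OF C3 that(1) r
        prefix_max_piece_prefix_append[OF C3 that(1-3)]
        not_piece_max_piece_prefix_append[OF C3 that(1-3)]
        prefix_order.trans[OF that(4) v]] by simp
  from C3 of show False
  proof (cases rule: overlap_factorisation_cases)
    case (single r1)
    then have "r1 = r"
      using first_block[of r1 "middle_word R r1"] relation_word_decomp(2)[OF C3] b by simp
    then show False using single(2) b long arg_cong[OF decomp, of length] by simp
  next
    case (multiple r1 y1 r2 y2 t)
    then have "r1 = r" using first_block[of r1 y1] b strict_prefix_def by simp
    with multiple b have "prefix (max_piece_prefix R r @ y1 @ max_piece_prefix R r2 @ y2) v"
      by (auto intro: prefixI)
    moreover have "strict_prefix y1 (middle_word R r)" using multiple(4) \<open>r1 = r\<close> by simp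
    ultimately show False
      using not_prefix_second_block[OF C3 r multiple(2,3) _ multiple(5,6)]
        prefix_order.trans[OF _ v] by blast
  qed
qed

lemma rho_ge:
  assumes "clean_overlap_prefix R u v" and "\<And>v. clean_overlap_prefix R u v \<Longrightarrow> length v \<le> k"
  shows "int (length u) - int k \<le> rho R u"
proof -
  have "\<exists>v. clean_overlap_prefix R u v" using assms(1) by blast
  moreover from this have "length (SOME v. clean_overlap_prefix R u v) \<le> k"
    by (rule assms(2)[OF someI_ex])
  ultimately show ?thesis unfolding rho_def by simp
qed

lemma rho_less:
  assumes "k \<le> length u" and "\<And>v. clean_overlap_prefix R u v \<Longrightarrow> k < length v"
  shows "rho R u < int (length u) - int k"
proof (cases "\<exists>v. clean_overlap_prefix R u v")
  case True
  then have "k < length (SOME v. clean_overlap_prefix R u v)"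
    by (rule assms(2)[OF someI_ex])
  with True show ?thesis unfolding rho_def by simp
next
  case False
  then have "rho R u = -1" unfolding rho_def by (simp only: if_False)
  with assms(1) show ?thesis by simp
qed

theorem lemma2:
  fixes R :: "('a list \<times> 'a list) set" and w w' r p :: "'a list"
  assumes "small_overlap_C 4 R"
    and "r \<in> relation_words R"
    and "w = r @ w'"
    and "clean_overlap_prefix R w (max_piece_prefix R r @ middle_word R r)"
    and "piece R p"
  shows "rho R (p @ w') < rho R w"
proof -
  have C3: "small_overlap_C 3 R" using small_overlap_C_mono[OF _ assms(1)] by simp
  have "int (length w) - int (length r) \<le> rho R w"
  proof (rule rho_ge[OF assms(4)])
    show "length v \<le> length r" if "clean_overlap_prefix R w v" for v
      using that overlap_prefix_length_le_relation_word[OF C3 assms(2)] assms(3)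
      unfolding clean_overlap_prefix_def by blast
  qed
  moreover have "rho R (p @ w') < int (length (p @ w')) - int (length p)"
  proof (rule rho_less)
    show "length p < length v" if "clean_overlap_prefix R (p @ w') v" for v
      using that overlap_prefix_longer_than_piece_prefix[OF C3 _ assms(5)]
      unfolding clean_overlap_prefix_def by (meson prefixI)
  qed simp
  ultimately show ?thesis using assms(3) by simp
qed

end
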